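(* Let $G$ be a connected graph with a fixed vertex $w$. Take a cycle $C_c$ of length $c\in\{5,6\}$, vertex-disjoint from $G$, and identify one vertex of the cycle with $w$. Let $v_2$ be a vertex of $C_c$ at distance $2$ from $w$ on the cycle, and let $v_1$ be the unique common neighbour of $w$ and $v_2$ on $C_c$. Attach a path of length $2$ (with two new vertices) by identifying one of its endpoints with $v_2$, and denote the resulting graph by $G^*$. Then $\delta_{G^*}(w) = t_{G^*}(w) - t_{G^*-v_1}(w) \leq -2$.
   Context: All graphs are finite, simple, undirected. For a graph $H$ and vertex $x$, the transmission is $t_H(x)=\sum_{y\in V(H)}\mathrm{dist}_H(x,y)$; $H-v$ denotes $H$ with vertex $v$ and its incident edges deleted. The quantity $\delta_{G^*}(w)$ is taken with respect to the vertex $v_1$. *)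

theory Defs
  imports Main
begin

definition simple_graph :: "'a set \<Rightarrow> ('a \<times> 'a) set \<Rightarrow> bool" where
  "simple_graph V E \<longleftrightarrow> finite V \<and> E \<subseteq> V \<times> V \<and> sym E \<and> (\<forall>x. (x, x) \<notin> E)"

definition is_walk :: "'a set \<Rightarrow> ('a \<times> 'a) set \<Rightarrow> 'a list \<Rightarrow> bool" where
  "is_walk V E xs \<longleftrightarrow> xs \<noteq> [] \<and> set xs \<subseteq> V \<and>
     (\<forall>i. Suc i < length xs \<longrightarrow> (xs ! i, xs ! Suc i) \<in> E)"

definition graph_connected :: "'a set \<Rightarrow> ('a \<times> 'a) set \<Rightarrow> bool" where
  "graph_connected V E \<longleftrightarrow>
     (\<forall>x\<in>V. \<forall>y\<in>V. \<exists>xs. is_walk V E xs \<and> hd xs = x \<and> last xs = y)"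

definition gdist :: "'a set \<Rightarrow> ('a \<times> 'a) set \<Rightarrow> 'a \<Rightarrow> 'a \<Rightarrow> nat" where
  "gdist V E x y = (LEAST n. \<exists>xs. is_walk V E xs \<and> hd xs = x \<and> last xs = y \<and> length xs = Suc n)"

definition transmission :: "'a set \<Rightarrow> ('a \<times> 'a) set \<Rightarrow> 'a \<Rightarrow> nat" where
  "transmission V E x = (\<Sum>y\<in>V. gdist V E x y)"

definition del_edges :: "('a \<times> 'a) set \<Rightarrow> 'a \<Rightarrow> ('a \<times> 'a) set" where
  "del_edges E v = {(a, b). (a, b) \<in> E \<and> a \<noteq> v \<and> b \<noteq> v}"

definition symcl :: "('a \<times> 'a) set \<Rightarrow> ('a \<times> 'a) set" where
  "symcl R = R \<union> R\<inverse>"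

definition cycle_edges :: "'a list \<Rightarrow> ('a \<times> 'a) set" where
  "cycle_edges cyc = symcl {(cyc ! i, cyc ! (Suc i mod length cyc)) | i. i < length cyc}"

end

theory Submission
  imports Defs
begin

text \<open>Deleting \<open>v\<^sub>1\<close> cannot shorten a distance from \<open>w\<close>, and every vertex of \<open>G\<^sup>* - v\<^sub>1\<close>
  stays reachable from \<open>w\<close> (through \<open>G\<close>, or around the rest of the cycle), so each term of
  \<open>t\<^bsub>G\<^sup>* - v\<^sub>1\<^esub>(w)\<close> dominates the corresponding term of \<open>t\<^bsub>G\<^sup>*\<^esub>(w)\<close>. The gain sits on \<open>v\<^sub>2\<close> and
  the pendant path \<open>x\<^sub>1 x\<^sub>2\<close>: in \<open>G\<^sup>*\<close> they are at distance at most 2, 3, 4 from \<open>w\<close>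
  through \<open>v\<^sub>1\<close>, while in \<open>G\<^sup>* - v\<^sub>1\<close> they are at distance at least \<open>c - 2\<close>, \<open>c - 1\<close>, \<open>c\<close>,
  as certified by a potential that grows by at most one along every edge. With the lost
  term \<open>d(w, v\<^sub>1) = 1\<close> this gives \<open>\<delta>(w) \<le> 13 - 3c\<close>, which is at most \<open>-2\<close> for every \<open>c \<ge> 5\<close>.\<close>

lemma is_walk_singleton [simp]: "is_walk V E [x] \<longleftrightarrow> x \<in> V"
  unfolding is_walk_def by auto

lemma is_walk_Cons_Cons [simp]:
  "is_walk V E (x # y # xs) \<longleftrightarrow> x \<in> V \<and> (x, y) \<in> E \<and> is_walk V E (y # xs)"
  unfolding is_walk_def by (auto simp: nth_Cons split: nat.splits)

lemma is_walk_snoc: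
  assumes "is_walk V E xs" "(last xs, z) \<in> E" "z \<in> V"
  shows "is_walk V E (xs @ [z])"
  unfolding is_walk_def
proof (intro conjI allI impI)
  fix i assume "Suc i < length (xs @ [z])"
  then consider "Suc i < length xs" | "i = length xs - 1" by fastforce
  then show "((xs @ [z]) ! i, (xs @ [z]) ! Suc i) \<in> E"
    by cases (use assms in \<open>auto simp: is_walk_def nth_append last_conv_nth\<close>)
qed (use assms in \<open>auto simp: is_walk_def\<close>)

lemma is_walk_take:
  assumes "is_walk V E xs" "0 < k"
  shows "is_walk V E (take k xs)"
  using assms unfolding is_walk_def
  by (auto dest: in_set_takeD)

definition reachable :: "'a set \<Rightarrow> ('a \<times> 'a) set \<Rightarrow> 'a \<Rightarrow> 'a \<Rightarrow> bool" where
  "reachable V E x y \<longleftrightarrow> (\<exists>xs. is_walk V E xs \<and> hd xs = x \<and> last xs = y)"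

lemma reachable_refl: "x \<in> V \<Longrightarrow> reachable V E x x"
  unfolding reachable_def by (metis is_walk_singleton last_ConsL list.sel(1))

lemma reachable_step:
  assumes "reachable V E x y" "(y, z) \<in> E" "z \<in> V"
  shows "reachable V E x z"
proof -
  obtain xs where xs: "is_walk V E xs" "hd xs = x" "last xs = y"
    using assms(1) unfolding reachable_def by blast
  then have "xs \<noteq> []" by (simp add: is_walk_def)
  with xs have "is_walk V E (xs @ [z]) \<and> hd (xs @ [z]) = x \<and> last (xs @ [z]) = z"
    using assms(2,3) by (simp add: is_walk_snoc)
  then show ?thesis unfolding reachable_def by blast
qed

lemma reachable_mono:
  "reachable V E x y \<Longrightarrow> V \<subseteq> V' \<Longrightarrow> E \<subseteq> E' \<Longrightarrow> reachable V' E' x y"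
  unfolding reachable_def is_walk_def by blast

lemma graph_connected_reachable:
  "graph_connected V E \<Longrightarrow> x \<in> V \<Longrightarrow> y \<in> V \<Longrightarrow> reachable V E x y"
  unfolding graph_connected_def reachable_def by blast

lemma gdist_le_walk:
  assumes "is_walk V E xs"
  shows "gdist V E (hd xs) (last xs) \<le> length xs - 1"
  unfolding gdist_def
  by (rule Least_le) (use assms in \<open>auto simp: is_walk_def\<close>)

lemma gdist_le_walk_nth:
  assumes "is_walk V E xs" "i < length xs"
  shows "gdist V E (hd xs) (xs ! i) \<le> i"
proof -
  have "last (take (Suc i) xs) = xs ! i"
    using assms(2) by (simp add: take_Suc_conv_app_nth)
  moreover have "hd (take (Suc i) xs) = hd xs"
    by (simp add: hd_take)
  ultimately show ?thesis
    using gdist_le_walk[OF is_walk_take[OF assms(1), of "Suc i"]] assms(2) by simp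
qed

text \<open>For a pair that is not reachable, \<open>gdist\<close> is the \<open>LEAST\<close> of an empty set, hence
  the reachability hypotheses below.\<close>

lemma shortest_walk_exists:
  assumes "reachable V E x y"
  obtains xs where "is_walk V E xs" "hd xs = x" "last xs = y" "length xs = Suc (gdist V E x y)"
proof -
  have "\<exists>n xs. is_walk V E xs \<and> hd xs = x \<and> last xs = y \<and> length xs = Suc n"
    using assms unfolding reachable_def is_walk_def by (metis Suc_pred length_greater_0_conv)
  from LeastI_ex[OF this] show ?thesis using that unfolding gdist_def by blast
qed

lemma gdist_subgraph_le:
  assumes "reachable V' E' x y" "V' \<subseteq> V" "E' \<subseteq> E"
  shows "gdist V E x y \<le> gdist V' E' x y"
proof -
  obtain xs where "is_walk V' E' xs" "hd xs = x" "last xs = y" "length xs = Suc (gdist V' E' x y)"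
    using shortest_walk_exists[OF assms(1)] .
  with gdist_le_walk[of V E xs] assms(2,3) show ?thesis
    unfolding is_walk_def by auto
qed

lemma walk_potential_le:
  assumes "is_walk V E xs" "\<And>p q. (p, q) \<in> E \<Longrightarrow> f q \<le> f p + 1"
  shows "f (last xs) \<le> f (hd xs) + (length xs - 1)"
  using assms(1)
proof (induction xs rule: induct_list012)
  case (3 x y zs)
  with assms(2)[of x y] show ?case by fastforce
qed (simp_all add: is_walk_def)

lemma gdist_potential_ge:
  assumes "reachable V E x y" "\<And>p q. (p, q) \<in> E \<Longrightarrow> f q \<le> f p + 1"
  shows "f y \<le> f x + gdist V E x y"
proof -
  obtain xs where "is_walk V E xs" "hd xs = x" "last xs = y" "length xs = Suc (gdist V E x y)"
    using shortest_walk_exists[OF assms(1)] .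
  with walk_potential_le[of V E xs f] assms(2) show ?thesis by simp
qed

lemma cycle_edges_nth_Suc:
  assumes "Suc i < length cyc"
  shows "(cyc ! i, cyc ! Suc i) \<in> cycle_edges cyc" "(cyc ! Suc i, cyc ! i) \<in> cycle_edges cyc"
  using assms unfolding cycle_edges_def symcl_def by force+

lemma cycle_edges_hd_last:
  assumes "cyc \<noteq> []"
  shows "(cyc ! 0, cyc ! (length cyc - 1)) \<in> cycle_edges cyc"
proof -
  have "Suc (length cyc - 1) mod length cyc = 0"
    using assms by simp
  then show ?thesis
    using assms unfolding cycle_edges_def symcl_def by force
qed

lemma mem_cycle_edges:
  "(p, q) \<in> cycle_edges cyc \<longleftrightarrow>
     (\<exists>i<length cyc. (p, q) = (cyc ! i, cyc ! (Suc i mod length cyc))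
                    \<or> (q, p) = (cyc ! i, cyc ! (Suc i mod length cyc)))"
  unfolding cycle_edges_def symcl_def by blast

locale cycle_with_pendant_path =
  fixes V :: "'a set" and E :: "('a \<times> 'a) set" and w :: 'a
    and cyc :: "'a list" and x1 x2 :: 'a
  assumes graph: "simple_graph V E" and connected: "graph_connected V E" and w_in_V: "w \<in> V"
    and length_cyc: "5 \<le> length cyc" and distinct_cyc: "distinct cyc" and cyc_0: "cyc ! 0 = w"
    and cyc_meets_V: "set cyc \<inter> V = {w}"
    and x1_new: "x1 \<notin> V \<union> set cyc" and x2_new: "x2 \<notin> V \<union> set cyc" and x1_ne_x2: "x1 \<noteq> x2"
begin

definition V_star :: "'a set" where
  "V_star = V \<union> set cyc \<union> {x1, x2}"

definition E_star :: "('a \<times> 'a) set" where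
  "E_star = E \<union> cycle_edges cyc \<union> symcl {(cyc ! 2, x1), (x1, x2)}"

definition V_del :: "'a set" where
  "V_del = V_star - {cyc ! 1}"

definition E_del :: "('a \<times> 'a) set" where
  "E_del = del_edges E_star (cyc ! 1)"

lemma cyc_not_Nil: "cyc \<noteq> []"
  using length_cyc by auto

lemma cyc_nth_eq_iff: "i < length cyc \<Longrightarrow> j < length cyc \<Longrightarrow> cyc ! i = cyc ! j \<longleftrightarrow> i = j"
  using distinct_cyc by (simp add: nth_eq_iff_index_eq)

lemma cyc_nth_ne_w: "0 < i \<Longrightarrow> i < length cyc \<Longrightarrow> cyc ! i \<noteq> w"
  using cyc_nth_eq_iff[of i 0] cyc_0 cyc_not_Nil by auto

lemma cyc_nth_notin_V: "0 < i \<Longrightarrow> i < length cyc \<Longrightarrow> cyc ! i \<notin> V"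
  using cyc_meets_V nth_mem[of i cyc] cyc_nth_ne_w by blast

lemma cyc_nth_in_V_del: "i < length cyc \<Longrightarrow> i \<noteq> 1 \<Longrightarrow> cyc ! i \<in> V_del"
  using length_cyc by (simp add: V_del_def V_star_def cyc_nth_eq_iff)

lemma w_in_V_del: "w \<in> V_del"
  using w_in_V cyc_nth_ne_w[of 1] length_cyc by (simp add: V_del_def V_star_def)

lemma E_subset_V_times_V: "E \<subseteq> V \<times> V"
  using graph by (simp add: simple_graph_def)

lemma mem_E_del: "(p, q) \<in> E_del \<longleftrightarrow> (p, q) \<in> E_star \<and> p \<noteq> cyc ! 1 \<and> q \<noteq> cyc ! 1"
  by (simp add: E_del_def del_edges_def)

lemma reachable_del_cyc:
  assumes "2 \<le> i" "i < length cyc"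
  shows "reachable V_del E_del w (cyc ! i)"
proof -
  have "i \<le> length cyc - 1"
    using assms(2) by simp
  then show ?thesis
  proof (induction rule: inc_induct)
    case base
    have "(w, cyc ! (length cyc - 1)) \<in> E_star"
      using cycle_edges_hd_last[OF cyc_not_Nil] cyc_0 by (simp add: E_star_def)
    moreover have "w \<noteq> cyc ! 1" "cyc ! (length cyc - 1) \<noteq> cyc ! 1"
      using cyc_nth_ne_w[of 1] cyc_nth_eq_iff[of "length cyc - 1" 1] length_cyc by auto
    ultimately have edge: "(w, cyc ! (length cyc - 1)) \<in> E_del"
      by (simp add: mem_E_del)
    show ?case
      using reachable_step[OF reachable_refl[OF w_in_V_del] edge] cyc_nth_in_V_del length_cyc
      by simp
  next
    case (step k)
    then have k: "2 \<le> k" "Suc k < length cyc"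
      using assms(1) by auto
    then have edge: "(cyc ! Suc k, cyc ! k) \<in> E_del"
      using cycle_edges_nth_Suc(2)[of k cyc] cyc_nth_eq_iff[of k 1] cyc_nth_eq_iff[of "Suc k" 1]
      by (simp add: mem_E_del E_star_def)
    show ?case
      using reachable_step[OF step.IH edge] cyc_nth_in_V_del k by simp
  qed
qed

lemma V_del_cases:
  assumes "y \<in> V_del"
  obtains "y \<in> V" | i where "2 \<le> i" "i < length cyc" "y = cyc ! i" | "y = x1" | "y = x2"
proof -
  consider "y \<in> V" | "y \<in> set cyc" | "y = x1" | "y = x2"
    using assms by (auto simp: V_del_def V_star_def)
  then show ?thesis
  proof cases
    case 2
    then obtain i where i: "i < length cyc" "y = cyc ! i"
      by (auto simp: in_set_conv_nth)
    moreover have "i \<noteq> 1"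
      using i assms by (auto simp: V_del_def)
    ultimately show ?thesis
    proof (cases "i = 0")
      case False
      with i \<open>i \<noteq> 1\<close> show ?thesis
        using that(2)[of i] by simp
    qed (use that(1) cyc_0 w_in_V in simp)
  qed (use that in auto)
qed

lemma reachable_del_pendant: "reachable V_del E_del w x1" "reachable V_del E_del w x2"
proof -
  have ne: "x1 \<noteq> cyc ! 1" "x2 \<noteq> cyc ! 1" "cyc ! 2 \<noteq> cyc ! 1"
    using x1_new x2_new cyc_nth_eq_iff[of 2 1] length_cyc by auto
  then have "(cyc ! 2, x1) \<in> E_del" "(x1, x2) \<in> E_del"
    by (simp_all add: mem_E_del E_star_def symcl_def)
  moreover have "x1 \<in> V_del" "x2 \<in> V_del"
    using ne by (simp_all add: V_del_def V_star_def)
  moreover have "reachable V_del E_del w (cyc ! 2)"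
    using reachable_del_cyc length_cyc by simp
  ultimately show "reachable V_del E_del w x1" "reachable V_del E_del w x2"
    by (metis reachable_step)+
qed

lemma reachable_del:
  assumes "y \<in> V_del"
  shows "reachable V_del E_del w y"
  using assms
proof (cases rule: V_del_cases)
  case 1
  have "V \<subseteq> V_del" "E \<subseteq> E_del"
    using cyc_nth_notin_V[of 1] length_cyc E_subset_V_times_V
    by (auto simp: V_del_def V_star_def mem_E_del E_star_def)
  then show ?thesis
    using 1 connected w_in_V graph_connected_reachable reachable_mono by metis
qed (use reachable_del_cyc reachable_del_pendant in auto)

lemma gdist_star_le_gdist_del: "y \<in> V_del \<Longrightarrow> gdist V_star E_star w y \<le> gdist V_del E_del w y"
  by (rule gdist_subgraph_le[OF reachable_del]) (auto simp: V_del_def E_del_def del_edges_def)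

lemma pendant_walk_star: "is_walk V_star E_star [w, cyc ! 1, cyc ! 2, x1, x2]"
proof -
  have "(cyc ! 0, cyc ! 1) \<in> cycle_edges cyc" "(cyc ! 1, cyc ! 2) \<in> cycle_edges cyc"
    using cycle_edges_nth_Suc(1)[of 0 cyc] cycle_edges_nth_Suc(1)[of 1 cyc] length_cyc
    by (simp_all add: numeral_2_eq_2)
  moreover have "cyc ! 1 \<in> set cyc" "cyc ! 2 \<in> set cyc"
    using length_cyc by simp_all
  ultimately show ?thesis
    using cyc_0 w_in_V by (simp add: V_star_def E_star_def symcl_def)
qed

text \<open>On the new vertices, \<open>height\<close> is their distance from \<open>w\<close> in \<open>G\<^sup>* - v\<^sub>1\<close>, where the
  only way out of \<open>w\<close> runs backwards around the cycle: \<open>cyc ! i\<close> is at distance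
  \<open>length cyc - i\<close>.\<close>

definition height :: "'a \<Rightarrow> nat" where
  "height y =
     (if y = x1 then length cyc - 1
      else if y = x2 then length cyc
      else if y \<in> set cyc - {w} then length cyc - the_inv_into {..<length cyc} ((!) cyc) y
      else 0)"

lemma height_cyc_nth: "0 < i \<Longrightarrow> i < length cyc \<Longrightarrow> height (cyc ! i) = length cyc - i"
  using x1_new x2_new cyc_nth_ne_w[of i] inj_on_nth[OF distinct_cyc, of "{..<length cyc}"]
  by (auto simp: height_def the_inv_into_f_f)

lemma height_V: "y \<in> V \<Longrightarrow> height y = 0"
  using x1_new x2_new cyc_meets_V by (auto simp: height_def)

lemma height_pendant: "height (cyc ! 2) = length cyc - 2" "height x1 = length cyc - 1"
  "height x2 = length cyc"
  using height_cyc_nth[of 2] length_cyc x1_ne_x2 by (simp_all add: height_def)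

lemma height_step:
  assumes "(p, q) \<in> E_del"
  shows "height q \<le> height p + 1"
proof -
  have "p \<noteq> cyc ! 1" "q \<noteq> cyc ! 1" "(p, q) \<in> E_star"
    using assms by (simp_all add: mem_E_del)
  then consider "(p, q) \<in> E" | "(p, q) \<in> cycle_edges cyc"
    | "(p, q) \<in> {(cyc ! 2, x1), (x1, x2), (x1, cyc ! 2), (x2, x1)}"
    unfolding E_star_def symcl_def by blast
  then show ?thesis
  proof cases
    case 1
    then show ?thesis
      using E_subset_V_times_V by (auto simp: height_V)
  next
    case 2
    then obtain i where i: "i < length cyc"
      and pq: "(p, q) = (cyc ! i, cyc ! (Suc i mod length cyc))
               \<or> (q, p) = (cyc ! i, cyc ! (Suc i mod length cyc))"
      unfolding mem_cycle_edges by blast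
    have "cyc ! i \<noteq> cyc ! 1" "cyc ! (Suc i mod length cyc) \<noteq> cyc ! 1"
      using pq \<open>p \<noteq> cyc ! 1\<close> \<open>q \<noteq> cyc ! 1\<close> by auto
    then have "i \<noteq> 0"
      using length_cyc by (cases "i = 0") auto
    have "height (cyc ! i) \<le> height (cyc ! (Suc i mod length cyc)) + 1
          \<and> height (cyc ! (Suc i mod length cyc)) \<le> height (cyc ! i) + 1"
    proof (cases "Suc i = length cyc")
      case True
      then show ?thesis
        using \<open>i \<noteq> 0\<close> cyc_0 w_in_V by (simp add: height_cyc_nth height_V)
    next
      case False
      then show ?thesis
        using i \<open>i \<noteq> 0\<close> by (simp add: height_cyc_nth, linarith)
    qed
    with pq show ?thesis by auto
  next
    case 3
    then show ?thesis
      using height_pendant by auto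
  qed
qed

lemma height_le_gdist_del:
  assumes "y \<in> V_del"
  shows "height y \<le> gdist V_del E_del w y"
proof -
  have "height y \<le> height w + gdist V_del E_del w y"
    by (rule gdist_potential_ge[OF reachable_del[OF assms]]) (rule height_step)
  then show ?thesis
    using height_V[OF w_in_V] by simp
qed

lemma pendant_in_V_del: "cyc ! 2 \<in> V_del" "x1 \<in> V_del" "x2 \<in> V_del"
  using cyc_nth_in_V_del[of 2] length_cyc x1_new x2_new by (auto simp: V_del_def V_star_def)

lemma gdist_del_pendant:
  "length cyc - 2 \<le> gdist V_del E_del w (cyc ! 2)"
  "length cyc - 1 \<le> gdist V_del E_del w x1"
  "length cyc \<le> gdist V_del E_del w x2"
  using height_le_gdist_del[OF pendant_in_V_del(1)] height_le_gdist_del[OF pendant_in_V_del(2)]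
    height_le_gdist_del[OF pendant_in_V_del(3)]
  by (simp_all add: height_pendant)

lemma gdist_star_pendant:
  "gdist V_star E_star w (cyc ! 1) \<le> 1" "gdist V_star E_star w (cyc ! 2) \<le> 2"
  "gdist V_star E_star w x1 \<le> 3" "gdist V_star E_star w x2 \<le> 4"
  using gdist_le_walk_nth[OF pendant_walk_star, of 1] gdist_le_walk_nth[OF pendant_walk_star, of 2]
    gdist_le_walk_nth[OF pendant_walk_star, of 3] gdist_le_walk_nth[OF pendant_walk_star, of 4]
  by simp_all

theorem transmission_difference_le:
  "int (transmission V_star E_star w) - int (transmission V_del E_del w) \<le> 13 - 3 * int (length cyc)"
proof -
  define excess where "excess y = int (gdist V_star E_star w y) - int (gdist V_del E_del w y)" for y
  let ?P = "{cyc ! 2, x1, x2}"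
  have fin: "finite V_del"
    using graph by (simp add: simple_graph_def V_del_def V_star_def)
  have v1: "V_star = insert (cyc ! 1) V_del" "cyc ! 1 \<notin> V_del"
    using length_cyc by (auto simp: V_del_def V_star_def)
  have "int (transmission V_star E_star w) - int (transmission V_del E_del w)
        = int (gdist V_star E_star w (cyc ! 1)) + (\<Sum>y\<in>V_del. excess y)"
    unfolding transmission_def v1(1) excess_def using fin v1(2)
    by (simp add: sum_subtractf)
  also have "(\<Sum>y\<in>V_del. excess y) \<le> (\<Sum>y\<in>?P. excess y)"
  proof -
    have "(\<Sum>y\<in>V_del - ?P. excess y) \<le> 0"
      by (rule sum_nonpos) (simp add: excess_def gdist_star_le_gdist_del)
    then show ?thesis
      using sum.subset_diff[OF _ fin, of ?P excess] pendant_in_V_del by simp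
  qed
  also have "(\<Sum>y\<in>?P. excess y) = excess (cyc ! 2) + excess x1 + excess x2"
  proof -
    have "cyc ! 2 \<in> set cyc"
      using length_cyc by simp
    then have "cyc ! 2 \<noteq> x1" "cyc ! 2 \<noteq> x2"
      using x1_new x2_new by auto
    then show ?thesis
      using x1_ne_x2 by (simp add: add.assoc)
  qed
  finally show ?thesis
    using gdist_star_pendant gdist_del_pendant length_cyc unfolding excess_def by linarith
qed

end

theorem lemma3:
  fixes V :: "'a set" and E :: "('a \<times> 'a) set" and w :: 'a
    and cyc :: "'a list" and x1 x2 :: 'a and c :: nat
  assumes "simple_graph V E" and "graph_connected V E" and "w \<in> V"
    and "c \<in> {5, 6}" and "length cyc = c" and "distinct cyc"
    and "cyc ! 0 = w" and "set cyc \<inter> V = {w}"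
    and "x1 \<notin> V \<union> set cyc" and "x2 \<notin> V \<union> set cyc" and "x1 \<noteq> x2"
  defines "Vs \<equiv> V \<union> set cyc \<union> {x1, x2}"
    and "Es \<equiv> E \<union> cycle_edges cyc \<union> symcl {(cyc ! 2, x1), (x1, x2)}"
  shows "int (transmission Vs Es w)
           - int (transmission (Vs - {cyc ! 1}) (del_edges Es (cyc ! 1)) w) \<le> -2"
proof -
  have "5 \<le> length cyc"
    using assms(4,5) by auto
  with assms(1-3,6-11) interpret cycle_with_pendant_path V E w cyc x1 x2
    by unfold_locales
  have "int (transmission Vs Es w)
          - int (transmission (Vs - {cyc ! 1}) (del_edges Es (cyc ! 1)) w) \<le> 13 - 3 * int c"
    using transmission_difference_le assms(5)
    unfolding Vs_def Es_def V_star_def E_star_def V_del_def E_del_def by simp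
  then show ?thesis
    using assms(4) by auto
qed

end
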